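(* If $(X,\Pi)$ is a finite strictly quasiconvex quasisupermodular aggregative game for which a fESS exists, then imitation is not subject to a money pump.
   Context: An aggregative game $(X,\Pi)$ consists of: a totally ordered action set $X$ (finite here) and a totally ordered set $Z$; a symmetric aggregator $a:X\times X\to Z$ ($a(x,y)=a(y,x)$) that is monotone increasing (if $x''\ge x'$, $y''\ge y'$ and $(x'',y'')\neq(x',y')$ then $a(x'',y'')>a(x',y')$); and $\Pi:X\times Z\to\mathbb{R}$, with underlying symmetric two-player game payoff $\pi(x,y)=\Pi(x,a(x,y))$. Quasisupermodular: for all $z''>z'$ and $x''>x'$, $\Pi(x'',z')-\Pi(x',z')\ge0\Rightarrow\Pi(x'',z'')-\Pi(x',z'')\ge0$ and the same with $>0$ in both places. Strictly quasiconvex: for all $x<x'<x''$ and $z$, $\Pi(x',z)<\max\{\Pi(x,z),\Pi(x'',z)\}$. fESS: $x^*$ with $\Pi(x^*,a(x^*,x))\ge\Pi(x,a(x^*,x))$ for all $x\in X$. Relative payoff: $\Delta(x,y)=\pi(x,y)-\pi(y,x)$. Imitate-the-best: given initial $y_0\in X$ and any opponent sequence $(x_t)_{t\ge0}$, $y_t=x_{t-1}$ if $\Delta(x_{t-1},y_{t-1})>0$ and $y_t=y_{t-1}$ otherwise. Imitation is not subject to a money pump if there is $M\in\mathbb{R}_+$ such that for every $y_0\in X$ and every sequence $(x_t)$, $\limsup_{T\to\infty}\sum_{t=0}^T\Delta(x_t,y_t)\le M$. *)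

theory Defs
  imports Complex_Main "HOL-Library.Liminf_Limsup" "HOL-Library.Extended_Real"
begin

text \<open>Action set X = the finite linearly ordered type 'x; Z = the linearly ordered type 'z.
  Aggregator a :: 'x => 'x => 'z, payoff Pi :: 'x => 'z => real.\<close>

definition symmetric_aggregator :: "('x \<Rightarrow> 'x \<Rightarrow> 'z) \<Rightarrow> bool" where
  "symmetric_aggregator a \<longleftrightarrow> (\<forall>x y. a x y = a y x)"

definition monotone_aggregator :: "('x::linorder \<Rightarrow> 'x \<Rightarrow> 'z::linorder) \<Rightarrow> bool" where
  "monotone_aggregator a \<longleftrightarrow>
     (\<forall>x' x'' y' y''. x'' \<ge> x' \<and> y'' \<ge> y' \<and> (x'', y'') \<noteq> (x', y') \<longrightarrow> a x'' y'' > a x' y')"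

definition quasisupermodular :: "('x::linorder \<Rightarrow> 'z::linorder \<Rightarrow> real) \<Rightarrow> bool" where
  "quasisupermodular Pi \<longleftrightarrow>
     (\<forall>z' z'' x' x''. z'' > z' \<and> x'' > x' \<longrightarrow>
        (Pi x'' z' - Pi x' z' \<ge> 0 \<longrightarrow> Pi x'' z'' - Pi x' z'' \<ge> 0) \<and>
        (Pi x'' z' - Pi x' z' > 0 \<longrightarrow> Pi x'' z'' - Pi x' z'' > 0))"

definition strictly_quasiconvex :: "('x::linorder \<Rightarrow> 'z \<Rightarrow> real) \<Rightarrow> bool" where
  "strictly_quasiconvex Pi \<longleftrightarrow>
     (\<forall>x x' x'' z. x < x' \<and> x' < x'' \<longrightarrow> Pi x' z < max (Pi x z) (Pi x'' z))"

definition is_fESS :: "('x \<Rightarrow> 'x \<Rightarrow> 'z) \<Rightarrow> ('x \<Rightarrow> 'z \<Rightarrow> real) \<Rightarrow> 'x \<Rightarrow> bool" where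
  "is_fESS a Pi xs \<longleftrightarrow> (\<forall>x. Pi xs (a xs x) \<ge> Pi x (a xs x))"

definition game_payoff :: "('x \<Rightarrow> 'x \<Rightarrow> 'z) \<Rightarrow> ('x \<Rightarrow> 'z \<Rightarrow> real) \<Rightarrow> 'x \<Rightarrow> 'x \<Rightarrow> real" where
  "game_payoff a Pi x y = Pi x (a x y)"

definition rel_payoff :: "('x \<Rightarrow> 'x \<Rightarrow> 'z) \<Rightarrow> ('x \<Rightarrow> 'z \<Rightarrow> real) \<Rightarrow> 'x \<Rightarrow> 'x \<Rightarrow> real" where
  "rel_payoff a Pi x y = game_payoff a Pi x y - game_payoff a Pi y x"

primrec imitation :: "('x \<Rightarrow> 'x \<Rightarrow> 'z) \<Rightarrow> ('x \<Rightarrow> 'z \<Rightarrow> real) \<Rightarrow> 'x \<Rightarrow> (nat \<Rightarrow> 'x) \<Rightarrow> nat \<Rightarrow> 'x" where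
  "imitation a Pi y0 xs 0 = y0"
| "imitation a Pi y0 xs (Suc t) =
     (if rel_payoff a Pi (xs t) (imitation a Pi y0 xs t) > 0 then xs t
      else imitation a Pi y0 xs t)"

definition no_money_pump :: "('x \<Rightarrow> 'x \<Rightarrow> 'z) \<Rightarrow> ('x \<Rightarrow> 'z \<Rightarrow> real) \<Rightarrow> bool" where
  "no_money_pump a Pi \<longleftrightarrow>
     (\<exists>M::real. M \<ge> 0 \<and> (\<forall>y0 xs.
        limsup (\<lambda>T. ereal (\<Sum>t\<le>T. rel_payoff a Pi (xs t) (imitation a Pi y0 xs t))) \<le> ereal M))"

end

theory Submission
  imports Defs
begin

text \<open>The strict relation ``x earns a positive relative payoff
  against y'' is transitive: quasisupermodularity carries a weak win of a higher action
  to higher aggregates, and strict quasiconvexity turns weak wins into strict ones. Imitation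
  only ever switches to an action that strictly beats the current one, so the number of actions
  beaten by the current action strictly increases at every switch; hence there are at most
  |X| switches. Periods without a switch contribute a non-positive relative payoff,
  a switch at most the largest relative payoff, so all partial sums are bounded.\<close>

lemma rel_payoff_self [simp]: "rel_payoff a Pi x x = 0"
  by (simp add: rel_payoff_def)

lemma rel_payoff_swap:
  assumes "symmetric_aggregator a"
  shows "rel_payoff a Pi y x = - rel_payoff a Pi x y"
  using assms by (simp add: rel_payoff_def game_payoff_def symmetric_aggregator_def)

locale qsm_quasiconvex_game =
  fixes a :: "'x::linorder \<Rightarrow> 'x \<Rightarrow> 'z::linorder" and Pi :: "'x \<Rightarrow> 'z \<Rightarrow> real"
  assumes symmetric: "symmetric_aggregator a"
    and monotone: "monotone_aggregator a"
    and qsm: "quasisupermodular Pi"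
    and sqc: "strictly_quasiconvex Pi"
begin

lemma rel_payoff_eq: "rel_payoff a Pi y x = Pi y (a x y) - Pi x (a x y)"
  using symmetric by (simp add: rel_payoff_def game_payoff_def symmetric_aggregator_def)

lemma aggregator_strict_mono_right: "y < y' \<Longrightarrow> a x y < a x y'"
  using monotone unfolding monotone_aggregator_def
  by (metis order_refl less_imp_le prod.inject order.strict_iff_not)

lemma aggregator_strict_mono_left: "x < x' \<Longrightarrow> a x y < a x' y"
  using monotone unfolding monotone_aggregator_def
  by (metis order_refl less_imp_le prod.inject order.strict_iff_not)

lemma rel_payoff_pos_above:
  assumes "x < y" "y < y'" "rel_payoff a Pi y x \<ge> 0"
  shows "rel_payoff a Pi y' x > 0"
proof -
  have "Pi y (a x y) - Pi x (a x y) \<ge> 0"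
    using assms(3) by (simp add: rel_payoff_eq)
  then have "Pi y (a x y') - Pi x (a x y') \<ge> 0"
    using qsm aggregator_strict_mono_right[OF assms(2)] assms(1)
    unfolding quasisupermodular_def by blast
  moreover have "Pi y (a x y') < max (Pi x (a x y')) (Pi y' (a x y'))"
    using sqc assms(1,2) unfolding strictly_quasiconvex_def by blast
  ultimately show ?thesis
    by (simp add: rel_payoff_eq max_def split: if_splits)
qed

lemma rel_payoff_pos_between:
  assumes "x < x'" "x' < y" "rel_payoff a Pi y x \<ge> 0"
  shows "rel_payoff a Pi y x' > 0"
proof -
  have "Pi y (a x y) - Pi x (a x y) \<ge> 0"
    using assms(3) by (simp add: rel_payoff_eq)
  moreover have "Pi x' (a x y) < max (Pi x (a x y)) (Pi y (a x y))"
    using sqc assms(1,2) unfolding strictly_quasiconvex_def by blast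
  ultimately have "Pi y (a x y) - Pi x' (a x y) > 0"
    by (simp add: max_def split: if_splits)
  then have "Pi y (a x' y) - Pi x' (a x' y) > 0"
    using qsm aggregator_strict_mono_left[OF assms(1)] assms(2)
    unfolding quasisupermodular_def by blast
  then show ?thesis
    by (simp add: rel_payoff_eq)
qed

lemma transp_rel_payoff_pos: "transp (\<lambda>x y. rel_payoff a Pi x y > 0)"
proof (rule transpI)
  fix p q r
  assume pq: "rel_payoff a Pi p q > 0" and qr: "rel_payoff a Pi q r > 0"
  have swap: "\<And>x y. rel_payoff a Pi y x = - rel_payoff a Pi x y"
    by (rule rel_payoff_swap[OF symmetric])
  have "p \<noteq> q" "q \<noteq> r" using pq qr by auto
  show "rel_payoff a Pi p r > 0"
  proof (cases "p = r")
    case True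
    then show ?thesis using pq qr swap[of p q] by simp
  next
    case False
    with \<open>p \<noteq> q\<close> \<open>q \<noteq> r\<close>
    consider "r < q" "q < p" | "p < q" "q < r" | "q < r" "r < p"
      | "q < p" "p < r" | "p < r" "r < q" | "r < p" "p < q"
      by (metis neqE order.strict_trans)
    then show ?thesis
    proof cases
      case 1
      show ?thesis using rel_payoff_pos_above[OF 1 less_imp_le[OF qr]] .
    next
      case 2
      have "\<not> rel_payoff a Pi r p \<ge> 0"
        using rel_payoff_pos_between[OF 2] qr swap[of q r] by fastforce
      then show ?thesis using swap[of p r] by linarith
    next
      case 3
      show ?thesis using rel_payoff_pos_between[OF 3 less_imp_le[OF pq]] .
    next
      case 4
      have "rel_payoff a Pi r q > 0" using rel_payoff_pos_above[OF 4 less_imp_le[OF pq]] .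
      then show ?thesis using qr swap[of q r] by linarith
    next
      case 5
      have "\<not> rel_payoff a Pi r p \<ge> 0"
        using rel_payoff_pos_above[OF 5] pq swap[of p q] by fastforce
      then show ?thesis using swap[of p r] by linarith
    next
      case 6
      have "rel_payoff a Pi q p > 0" using rel_payoff_pos_between[OF 6 less_imp_le[OF qr]] .
      then show ?thesis using pq swap[of p q] by linarith
    qed
  qed
qed

end

definition max_rel_payoff :: "('x::finite \<Rightarrow> 'x \<Rightarrow> 'z) \<Rightarrow> ('x \<Rightarrow> 'z \<Rightarrow> real) \<Rightarrow> real" where
  "max_rel_payoff a Pi = Max (range (case_prod (rel_payoff a Pi)))"

lemma rel_payoff_le_max_rel_payoff: "rel_payoff a Pi x y \<le> max_rel_payoff a Pi"
  unfolding max_rel_payoff_def by (rule Max_ge) auto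

lemma max_rel_payoff_nonneg: "max_rel_payoff a Pi \<ge> 0"
  using rel_payoff_le_max_rel_payoff[of a Pi undefined undefined] by simp

definition beaten_count :: "('x::finite \<Rightarrow> 'x \<Rightarrow> 'z) \<Rightarrow> ('x \<Rightarrow> 'z \<Rightarrow> real) \<Rightarrow> 'x \<Rightarrow> nat" where
  "beaten_count a Pi x = card {w. rel_payoff a Pi x w > 0}"

lemma beaten_count_strict_mono:
  assumes "transp (\<lambda>x y. rel_payoff a Pi x y > 0)" and "rel_payoff a Pi y x > 0"
  shows "beaten_count a Pi x < beaten_count a Pi y"
proof -
  have "{w. rel_payoff a Pi x w > 0} \<subset> {w. rel_payoff a Pi y w > 0}"
    using assms transpD[OF assms(1)] by fastforce
  then show ?thesis
    unfolding beaten_count_def by (simp add: psubset_card_mono)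
qed

lemma imitation_partial_sum_le_beaten_count:
  fixes a :: "'x::finite \<Rightarrow> 'x \<Rightarrow> 'z" and y\<^sub>0 :: 'x and xs :: "nat \<Rightarrow> 'x"
  assumes "transp (\<lambda>x y. rel_payoff a Pi x y > 0)"
  defines "K \<equiv> max_rel_payoff a Pi" and "y \<equiv> imitation a Pi y\<^sub>0 xs"
  shows "(\<Sum>t<T. rel_payoff a Pi (xs t) (y t))
           \<le> K * (real (beaten_count a Pi (y T)) - real (beaten_count a Pi (y 0)))"
proof (induction T)
  case 0
  then show ?case by simp
next
  case (Suc T)
  show ?case
  proof (cases "rel_payoff a Pi (xs T) (y T) > 0")
    case True
    have "beaten_count a Pi (y T) < beaten_count a Pi (y (Suc T))"
      using True beaten_count_strict_mono[OF assms(1)] by (simp add: y_def)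
    then have "1 \<le> real (beaten_count a Pi (y (Suc T))) - real (beaten_count a Pi (y T))"
      by linarith
    moreover have "rel_payoff a Pi (xs T) (y T) \<le> K"
      unfolding K_def by (rule rel_payoff_le_max_rel_payoff)
    moreover have "K \<ge> 0"
      unfolding K_def by (rule max_rel_payoff_nonneg)
    ultimately have "rel_payoff a Pi (xs T) (y T)
        \<le> K * (real (beaten_count a Pi (y (Suc T))) - real (beaten_count a Pi (y T)))"
      using mult_left_mono[of 1 _ K] by fastforce
    then show ?thesis using Suc.IH by (simp add: algebra_simps)
  next
    case False
    then show ?thesis using Suc.IH by (simp add: y_def)
  qed
qed

lemma beaten_count_le_card:
  fixes x :: "'x::finite"
  shows "beaten_count a Pi x \<le> card (UNIV :: 'x set)"
  unfolding beaten_count_def by (simp add: card_mono)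

lemma imitation_partial_sum_le:
  fixes a :: "'x::finite \<Rightarrow> 'x \<Rightarrow> 'z"
  assumes "transp (\<lambda>x y. rel_payoff a Pi x y > 0)"
  shows "(\<Sum>t\<le>T. rel_payoff a Pi (xs t) (imitation a Pi y0 xs t))
           \<le> max_rel_payoff a Pi * real (card (UNIV :: 'x set))"
proof -
  let ?y = "imitation a Pi y0 xs" and ?K = "max_rel_payoff a Pi"
  have "(\<Sum>t\<le>T. rel_payoff a Pi (xs t) (?y t))
      \<le> ?K * (real (beaten_count a Pi (?y (Suc T))) - real (beaten_count a Pi (?y 0)))"
    using imitation_partial_sum_le_beaten_count[OF assms, where T = "Suc T"]
    by (simp only: lessThan_Suc_atMost)
  also have "\<dots> \<le> ?K * real (card (UNIV :: 'x set))"
  proof (rule mult_left_mono)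
    have "real (beaten_count a Pi (?y (Suc T))) \<le> real (card (UNIV :: 'x set))"
      by (rule of_nat_mono[OF beaten_count_le_card])
    then show "real (beaten_count a Pi (?y (Suc T))) - real (beaten_count a Pi (?y 0))
        \<le> real (card (UNIV :: 'x set))"
      by linarith
  qed (rule max_rel_payoff_nonneg)
  finally show ?thesis .
qed

theorem proposition7:
  fixes a :: "'x::{finite,linorder} \<Rightarrow> 'x \<Rightarrow> 'z::linorder"
    and Pi :: "'x \<Rightarrow> 'z \<Rightarrow> real"
  assumes "symmetric_aggregator a"
    and "monotone_aggregator a"
    and "quasisupermodular Pi"
    and "strictly_quasiconvex Pi"
    and "\<exists>xstar. is_fESS a Pi xstar"
  shows "no_money_pump a Pi"
proof -
  interpret qsm_quasiconvex_game a Pi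
    using assms(1-4) by unfold_locales
  let ?M = "max_rel_payoff a Pi * real (card (UNIV :: 'x set))"
  have "?M \<ge> 0"
    using max_rel_payoff_nonneg[of a Pi] by simp
  moreover have "limsup (\<lambda>T. ereal (\<Sum>t\<le>T. rel_payoff a Pi (xs t) (imitation a Pi y0 xs t)))
      \<le> ereal ?M" for y0 xs
    by (rule Limsup_bounded)
      (simp add: imitation_partial_sum_le[OF transp_rel_payoff_pos])
  ultimately show ?thesis
    unfolding no_money_pump_def by blast
qed

end
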